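(* Under the standing assumptions below, let $e,f\in S_1$ with $ef=f$. Then $\|\theta(e)-\theta(f)\|_{HS}\le5\delta$.
   Context: Standing assumptions: $S$ is a semilattice (commutative semigroup of idempotents), $0\le\delta<0.03$, and $\theta:S\to M_2(\mathbb C)$ satisfies $\|\theta(e)\theta(f)-\theta(ef)\|_{HS}\le\delta$ for all $e,f\in S$, where $\|A\|_{HS}=(\operatorname{tr}(A^*A))^{1/2}$. For $k\in\{0,1,2\}$, $S_k=\{x\in S:\ |\operatorname{tr}\theta(x)-k|<0.95\}$; these sets are pairwise disjoint and cover $S$. *)

theory Defs
  imports "HOL-Analysis.Analysis"
begin

definition mtrace :: "complex^2^2 \<Rightarrow> complex" where
  "mtrace A = (\<Sum>i\<in>UNIV. A $ i $ i)"

text \<open>Hilbert--Schmidt (Frobenius) norm: (tr(A^* A))^(1/2) = sqrt of sum of |a_ij|^2.\<close>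
definition hs_norm :: "complex^2^2 \<Rightarrow> real" where
  "hs_norm A = sqrt (\<Sum>i\<in>UNIV. \<Sum>j\<in>UNIV. (cmod (A $ i $ j))\<^sup>2)"

definition Sk :: "('a \<Rightarrow> complex^2^2) \<Rightarrow> nat \<Rightarrow> 'a set" where
  "Sk \<theta> k = {x. cmod (mtrace (\<theta> x) - of_nat k) < 0.95}"

end

theory Submission
  imports Defs
begin

(*
  Write X(A) = A^2 - A for the idempotency
  defect of a matrix A, t = tr A and d = det A.  Everything rests on three polynomial
  identities valid for 2x2 matrices over any commutative ring:
     tr X(A) = t^2 - t - 2d,     det X(A) = d (d - t + 1),
     X(A) = (t - 1) A - d I      (Cayley-Hamilton).
  (1) If |X(A)| <= delta and |t - 1| < 0.95, the first two identities force |t - 1| <= 1.5 delta: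
      the trace of an almost-idempotent that is not near 0 or 2 is almost exactly 1.
  (2) If |X(D)| <= 4 delta and |tr D| <= 3 delta, the same identities make det D tiny and
      tr D - 1 close to -1, so Cayley-Hamilton gives |D| <= 5 delta.
  For the theorem, with E = theta e, F = theta f and ef = f, the defect of D = E - F is a
  signed sum of the four defects E^2 - E, EF - F, FE - F, F^2 - F, hence at most 4 delta,
  while (1) applied to E and F bounds tr D = (tr E - 1) - (tr F - 1) by 3 delta; (2) finishes.
*)

lemma mtrace_eq_trace: "mtrace = trace"
  by (simp add: fun_eq_iff mtrace_def trace_def)

lemma hs_norm_eq_norm: "hs_norm A = norm A"
proof -
  have "\<And>i. (norm (A $ i))\<^sup>2 = (\<Sum>j\<in>UNIV. (cmod (A $ i $ j))\<^sup>2)"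
    by (simp add: norm_vec_def L2_set_def sum_nonneg)
  then show ?thesis by (simp add: hs_norm_def norm_vec_def L2_set_def)
qed

lemma trace_2: "trace (A::'a::semiring_1^2^2) = A$1$1 + A$2$2"
  by (simp add: trace_def sum_2)

lemma matrix_mult_2: "((A::'a::semiring_1^2^2) ** B) $ i $ j = A$i$1 * B$1$j + A$i$2 * B$2$j"
  by (simp add: matrix_matrix_mult_def sum_2)

lemma mat_mult_entry: "(mat c ** (A::'a::semiring_1^'n^'m)) $ i $ j = c * A$i$j"
  by (simp add: matrix_matrix_mult_def mat_def if_distrib[of "\<lambda>x. x * _"] cong: if_cong)

lemma norm_sq_2:
  "(norm (A::complex^2^2))\<^sup>2
     = (cmod (A$1$1))\<^sup>2 + (cmod (A$1$2))\<^sup>2 + (cmod (A$2$1))\<^sup>2 + (cmod (A$2$2))\<^sup>2"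
  by (simp add: hs_norm_eq_norm[symmetric] hs_norm_def sum_2 add.assoc sum_nonneg)

lemma sq_sum_le: "((a::real) + b)\<^sup>2 \<le> 2 * (a\<^sup>2 + b\<^sup>2)"
  using sum_squares_bound[of a b] by (simp add: power2_eq_square algebra_simps)

lemma prod_le_half_sq_sum: "(a::real) * b \<le> (a\<^sup>2 + b\<^sup>2) / 2"
  using sum_squares_bound[of a b] by simp

text \<open>The trace is a linear functional of norm \<open>sqrt 2 < 3/2\<close>.\<close>
lemma norm_trace_le: "cmod (trace (X::complex^2^2)) \<le> 3/2 * norm X"
proof -
  have "(cmod (X$1$1) + cmod (X$2$2))\<^sup>2 \<le> 2 * ((cmod (X$1$1))\<^sup>2 + (cmod (X$2$2))\<^sup>2)"
    by (rule sq_sum_le)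
  also have "\<dots> \<le> 2 * (norm X)\<^sup>2" unfolding norm_sq_2 by simp
  also have "\<dots> \<le> (3/2 * norm X)\<^sup>2" by (simp add: power2_eq_square)
  finally have "cmod (X$1$1) + cmod (X$2$2) \<le> 3/2 * norm X"
    by (rule power2_le_imp_le) simp
  then show ?thesis
    unfolding trace_2 using norm_triangle_ineq[of "X$1$1" "X$2$2"] by linarith
qed

lemma norm_det_le: "cmod (det (X::complex^2^2)) \<le> (norm X)\<^sup>2 / 2"
proof -
  have "cmod (det X) \<le> cmod (X$1$1) * cmod (X$2$2) + cmod (X$1$2) * cmod (X$2$1)"
    unfolding det_2 using norm_triangle_ineq4[of "X$1$1 * X$2$2" "X$1$2 * X$2$1"]
    by (simp add: norm_mult)
  then show ?thesis
    using prod_le_half_sq_sum[of "cmod (X$1$1)" "cmod (X$2$2)"]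
      prod_le_half_sq_sum[of "cmod (X$1$2)" "cmod (X$2$1)"] norm_sq_2[of X]
    by argo
qed

lemma norm_discriminant_le:
  "cmod ((trace X)\<^sup>2 - 4 * det (X::complex^2^2)) \<le> 2 * (norm X)\<^sup>2"
proof -
  have "(trace X)\<^sup>2 - 4 * det X = (X$1$1 - X$2$2)\<^sup>2 + 4 * (X$1$2 * X$2$1)"
    unfolding trace_2 det_2 by algebra
  then have "cmod ((trace X)\<^sup>2 - 4 * det X)
      \<le> (cmod (X$1$1 - X$2$2))\<^sup>2 + 4 * (cmod (X$1$2) * cmod (X$2$1))"
    using norm_triangle_ineq[of "(X$1$1 - X$2$2)\<^sup>2" "4 * (X$1$2 * X$2$1)"]
    by (simp add: norm_mult norm_power)
  also have "\<dots> \<le> (cmod (X$1$1) + cmod (X$2$2))\<^sup>2 + 4 * (cmod (X$1$2) * cmod (X$2$1))"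
    by (simp add: norm_triangle_ineq4 power_mono)
  also have "\<dots> \<le> 2 * (norm X)\<^sup>2"
    using sq_sum_le[of "cmod (X$1$1)" "cmod (X$2$2)"]
      prod_le_half_sq_sum[of "cmod (X$1$2)" "cmod (X$2$1)"] norm_sq_2[of X]
    by argo
  finally show ?thesis .
qed

lemma norm_mat_mult: "norm (mat c ** (A::complex^2^2)) = cmod c * norm A"
proof -
  have "(norm (mat c ** A))\<^sup>2 = (cmod c * norm A)\<^sup>2"
    unfolding power_mult_distrib norm_sq_2 mat_mult_entry
    by (simp add: norm_mult power_mult_distrib algebra_simps)
  then show ?thesis by (simp add: power2_eq_iff_nonneg)
qed

lemma norm_mat_le: "norm (mat c :: complex^2^2) \<le> 3/2 * cmod c"
proof -
  have "(norm (mat c :: complex^2^2))\<^sup>2 = 2 * (cmod c)\<^sup>2"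
    unfolding norm_sq_2 by (simp add: mat_def)
  also have "\<dots> \<le> (3/2 * cmod c)\<^sup>2" by (simp add: power2_eq_square)
  finally show ?thesis by (rule power2_le_imp_le) simp
qed

lemma trace_idem_defect:
  "trace (A ** A - A) = (trace A)\<^sup>2 - trace A - 2 * det (A::'a::comm_ring_1^2^2)"
  unfolding trace_2 det_2 by (simp add: matrix_mult_2 power2_eq_square algebra_simps)

lemma det_idem_defect:
  "det (A ** A - A) = det A * (det A - trace A + 1)" for A :: "'a::comm_ring_1^2^2"
  unfolding trace_2 det_2 by (simp add: matrix_mult_2 algebra_simps)

text \<open>Cayley--Hamilton for 2x2 matrices, \<open>A\<^sup>2 - tr A \<cdot> A + det A \<cdot> I = 0\<close>, in defect form.\<close>
lemma cayley_hamilton_idem_defect: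
  "mat (trace A - 1) ** A = (A ** A - A) + mat (det A)" for A :: "'a::comm_ring_1^2^2"
  unfolding trace_2 det_2
  by (simp add: vec_eq_iff forall_2 matrix_mult_2 mat_mult_entry mat_def algebra_simps)

text \<open>Eliminating \<open>det A\<close> between the first two identities: a polynomial relation between
  \<open>u = tr A - 1\<close> and the trace and discriminant of the defect.\<close>
lemma trace_defect_relation:
  fixes A :: "'a::comm_ring_1^2^2"
  defines "u \<equiv> trace A - 1" and "X \<equiv> A ** A - A"
  shows "u\<^sup>2 = u^4 - 2 * u\<^sup>2 * trace X + ((trace X)\<^sup>2 - 4 * det X)"
  unfolding u_def X_def trace_idem_defect det_idem_defect
  by (simp add: algebra_simps power2_eq_square power4_eq_xxxx)

text \<open>The defect of \<open>E - F\<close> as a signed sum of four defects, all of which are small when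
  \<open>E\<close>, \<open>F\<close> are almost idempotent and \<open>EF \<approx> FE \<approx> F\<close>.\<close>
lemma idem_defect_diff:
  "(E - F) ** (E - F) - (E - F)
     = ((E ** E - E) - (E ** F - F)) - ((F ** E - F) - (F ** F - F))"
  for E F :: "'a::comm_ring_1^'n^'n"
  by (simp add: vec_eq_iff matrix_matrix_mult_def sum_subtractf left_diff_distrib right_diff_distrib)

text \<open>The quartic constraint coming from \<open>trace_defect_relation\<close>: a solution below \<open>0.95\<close>
  is of the order of \<open>\<delta>\<close>.  The region \<open>0.1 \<le> r < 0.95\<close> is excluded first.\<close>
lemma quartic_small_root:
  fixes r a b \<delta> :: real
  assumes r: "0 \<le> r" "r < 0.95" and rel: "r\<^sup>2 \<le> r^4 + 2 * r\<^sup>2 * a + b"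
    and a: "a \<le> 3/2 * \<delta>" and b: "b \<le> 2 * \<delta>\<^sup>2" and \<delta>: "0 \<le> \<delta>" "\<delta> < 0.03"
  shows "r \<le> 3/2 * \<delta>"
proof -
  define s where "s = r\<^sup>2"
  have s0: "0 \<le> s" and s1: "s \<le> 9025/10000"
    using r power_mono[of r "0.95" 2] unfolding s_def by (auto simp: power2_eq_square)
  have rel_s: "s \<le> s * s + 2 * s * a + b"
    using rel unfolding s_def by (simp add: power2_eq_square power4_eq_xxxx)
  have \<delta>_le: "\<delta> \<le> 3/100" using \<delta> by simp
  have "2 * s * a \<le> 2 * s * (3/2 * (3/100))"
    using a \<delta>_le s0 by (intro mult_left_mono) auto
  then have sa: "2 * s * a \<le> 9/100 * s" by simp
  have "\<delta> * \<delta> \<le> 3/100 * (3/100)" using \<delta>_le \<delta> by (intro mult_mono) auto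
  then have "b \<le> 18/10000" using b unfolding power2_eq_square by linarith
  have small: "s < 1/100"
  proof (rule ccontr)
    assume "\<not> s < 1/100"
    then have "0 \<le> (s - 1/100) * (9025/10000 - s)" using s1 by simp
    also have "\<dots> = 9125/10000 * s - s * s - 9025/1000000" by (simp add: field_simps)
    finally show False using rel_s sa \<open>b \<le> 18/10000\<close> s1 by linarith
  qed
  have "s * s \<le> 1/100 * s" using small s0 by (intro mult_right_mono) auto
  then have "s \<le> 9/4 * \<delta>\<^sup>2" using rel_s sa b zero_le_power2[of \<delta>] by linarith
  then have "r\<^sup>2 \<le> (3/2 * \<delta>)\<^sup>2" unfolding s_def by (simp add: power_mult_distrib power_divide)
  then show ?thesis by (rule power2_le_imp_le) (use \<delta> in simp)
qed

lemma small_trace_det_bounds: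
  fixes t d :: complex and \<delta> :: real
  assumes t: "cmod t \<le> 3 * \<delta>"
    and tr: "cmod (t\<^sup>2 - t - 2 * d) \<le> 6 * \<delta>"
    and det: "cmod (d * (d - t + 1)) \<le> 8 * \<delta>\<^sup>2"
    and \<delta>: "0 \<le> \<delta>" "\<delta> < 0.03"
  shows "cmod d \<le> 0.32 * \<delta>" and "0.91 \<le> cmod (t - 1)"
proof -
  have \<delta>_le: "\<delta> \<le> 3/100" using \<delta> by simp
  have t_small: "cmod t \<le> 9/100" using t \<delta>_le by linarith
  have "cmod (t\<^sup>2) \<le> 81/10000"
    using mult_mono[OF t_small t_small] by (simp add: power2_eq_square norm_mult)
  moreover have "2 * cmod d \<le> cmod (t\<^sup>2) + cmod t + cmod (t\<^sup>2 - t - 2 * d)"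
    using norm_triangle_ineq4[of "t\<^sup>2 - t" "t\<^sup>2 - t - 2 * d"] norm_triangle_ineq4[of "t\<^sup>2" t]
    by simp
  ultimately have d_small: "cmod d \<le> 14/100" using tr t_small \<delta>_le by linarith
  have "1 \<le> cmod (d - t + 1) + cmod d + cmod t"
    using norm_triangle_ineq4[of "d - t + 1" "d - t"] norm_triangle_ineq4[of d t] by simp
  then have "77/100 \<le> cmod (d - t + 1)" using d_small t_small by linarith
  then have "cmod d * (77/100) \<le> cmod (d * (d - t + 1))"
    unfolding norm_mult by (rule mult_left_mono) simp_all
  also have "\<dots> \<le> \<delta> * (8 * \<delta>)" using det by (simp add: power2_eq_square)
  also have "\<dots> \<le> \<delta> * (24/100)" using \<delta> \<delta>_le by (intro mult_left_mono) auto
  finally show "cmod d \<le> 0.32 * \<delta>" using \<delta> by simp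
  show "0.91 \<le> cmod (t - 1)"
    using norm_triangle_ineq4[of t "t - 1"] t_small by simp
qed

lemma almost_idempotent_trace:
  fixes A :: "complex^2^2"
  assumes defect: "norm (A ** A - A) \<le> \<delta>" and tr: "cmod (trace A - 1) < 0.95"
    and \<delta>: "0 \<le> \<delta>" "\<delta> < 0.03"
  shows "cmod (trace A - 1) \<le> 3/2 * \<delta>"
proof -
  define u where "u = trace A - 1"
  define X where "X = A ** A - A"
  have "u\<^sup>2 = u^4 - 2 * u\<^sup>2 * trace X + ((trace X)\<^sup>2 - 4 * det X)"
    unfolding u_def X_def by (rule trace_defect_relation)
  then have "cmod (u\<^sup>2) \<le> cmod (u^4) + cmod (2 * u\<^sup>2 * trace X) + cmod ((trace X)\<^sup>2 - 4 * det X)"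
    using norm_triangle_ineq[of "u^4 - 2 * u\<^sup>2 * trace X" "(trace X)\<^sup>2 - 4 * det X"]
      norm_triangle_ineq4[of "u^4" "2 * u\<^sup>2 * trace X"] by simp
  then have rel: "(cmod u)\<^sup>2
      \<le> (cmod u)^4 + 2 * (cmod u)\<^sup>2 * cmod (trace X) + cmod ((trace X)\<^sup>2 - 4 * det X)"
    by (simp add: norm_mult norm_power)
  have "cmod (trace X) \<le> 3/2 * \<delta>"
    using norm_trace_le[of X] defect unfolding X_def by linarith
  moreover have "(norm X)\<^sup>2 \<le> \<delta>\<^sup>2"
    using defect unfolding X_def by (intro power_mono) auto
  then have "cmod ((trace X)\<^sup>2 - 4 * det X) \<le> 2 * \<delta>\<^sup>2"
    using norm_discriminant_le[of X] by linarith
  ultimately show ?thesis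
    using quartic_small_root[OF _ _ rel _ _ \<delta>] tr unfolding u_def by simp
qed

text \<open>An almost idempotent with small trace is small: Cayley--Hamilton expresses
  \<open>(tr D - 1) D\<close> through the defect and \<open>det D\<close>, and \<open>|tr D - 1| \<ge> 0.91\<close>.\<close>
lemma almost_idempotent_small_trace:
  fixes D :: "complex^2^2"
  assumes defect: "norm (D ** D - D) \<le> 4 * \<delta>" and tr: "cmod (trace D) \<le> 3 * \<delta>"
    and \<delta>: "0 \<le> \<delta>" "\<delta> < 0.03"
  shows "norm D \<le> 5 * \<delta>"
proof -
  let ?X = "D ** D - D"
  have "cmod (trace ?X) \<le> 6 * \<delta>"
    using norm_trace_le[of ?X] defect by linarith
  moreover have "(norm ?X)\<^sup>2 \<le> (4 * \<delta>)\<^sup>2"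
    using defect by (intro power_mono) auto
  then have "cmod (det ?X) \<le> 8 * \<delta>\<^sup>2"
    using norm_det_le[of ?X] by (simp add: power_mult_distrib)
  ultimately have d: "cmod (det D) \<le> 0.32 * \<delta>" and t: "0.91 \<le> cmod (trace D - 1)"
    using small_trace_det_bounds[OF tr _ _ \<delta>] by (simp_all add: trace_idem_defect det_idem_defect)
  have "cmod (trace D - 1) * norm D = norm (?X + mat (det D))"
    by (simp add: norm_mat_mult cayley_hamilton_idem_defect[symmetric])
  also have "\<dots> \<le> 4 * \<delta> + 3/2 * (0.32 * \<delta>)"
    using norm_triangle_ineq[of ?X "mat (det D)"] defect norm_mat_le[of "det D"] d by linarith
  finally have "91/100 * norm D \<le> 448/100 * \<delta>"
    using mult_right_mono[OF t norm_ge_zero[of D]] by simp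
  then show ?thesis using \<delta> by simp
qed

theorem lemmal:
  fixes \<theta> :: "'a::ab_semigroup_mult \<Rightarrow> complex^2^2"
    and \<delta> :: real and e f :: 'a
  assumes idem: "\<And>x::'a. x * x = x"
    and delta_nonneg: "0 \<le> \<delta>" and delta_small: "\<delta> < 0.03"
    and approx: "\<And>x y. hs_norm (\<theta> x ** \<theta> y - \<theta> (x * y)) \<le> \<delta>"
    and e_in: "e \<in> Sk \<theta> 1" and f_in: "f \<in> Sk \<theta> 1"
    and ef: "e * f = f"
  shows "hs_norm (\<theta> e - \<theta> f) \<le> 5 * \<delta>"
proof -
  note \<delta> = delta_nonneg delta_small
  let ?E = "\<theta> e" and ?F = "\<theta> f"
  have EE: "norm (?E ** ?E - ?E) \<le> \<delta>" and FF: "norm (?F ** ?F - ?F) \<le> \<delta>"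
    and EF: "norm (?E ** ?F - ?F) \<le> \<delta>" and FE: "norm (?F ** ?E - ?F) \<le> \<delta>"
    using approx[of e e] approx[of f f] approx[of e f] approx[of f e] idem[of e] idem[of f] ef
    by (simp_all add: hs_norm_eq_norm mult.commute)
  have "norm ((?E - ?F) ** (?E - ?F) - (?E - ?F)) \<le> 4 * \<delta>"
    unfolding idem_defect_diff
    using norm_triangle_ineq4[of "?E ** ?E - ?E" "?E ** ?F - ?F"]
      norm_triangle_ineq4[of "?F ** ?E - ?F" "?F ** ?F - ?F"]
      norm_triangle_ineq4[of "(?E ** ?E - ?E) - (?E ** ?F - ?F)" "(?F ** ?E - ?F) - (?F ** ?F - ?F)"]
      EE FF EF FE by linarith
  moreover have "cmod (trace ?E - 1) \<le> 3/2 * \<delta>" "cmod (trace ?F - 1) \<le> 3/2 * \<delta>"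
    using almost_idempotent_trace[OF EE _ \<delta>] almost_idempotent_trace[OF FF _ \<delta>] e_in f_in
    by (simp_all add: Sk_def mtrace_eq_trace)
  then have "cmod (trace (?E - ?F)) \<le> 3 * \<delta>"
    using norm_triangle_ineq4[of "trace ?E - 1" "trace ?F - 1"] by (simp add: trace_sub)
  ultimately show ?thesis
    unfolding hs_norm_eq_norm by (rule almost_idempotent_small_trace[OF _ _ \<delta>])
qed

end
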